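(* Let $n\ge1$ and $1\le k\le n$. With $F_k$, $\Omega$ and $\mathcal I$ as in the context, $\Omega F_k\equiv\big(4nk-2k(k-1)\big)F_k\pmod{\mathcal I}$.
   Context: Let $\mathbb C[\mathrm{Mat}_{2n}^{\mathbb R}]$ be the ring of complex polynomials in the real and imaginary parts of the entries of $Z=(z_{a,b})\in M_{2n}(\mathbb C)$, viewed as polynomials in $z_{a,b},\bar z_{a,b}$. For $1\le j,l\le 2n$, $\Phi_{jl}=\sum_{i=1}^n z_{j,i}\bar z_{l,i}$, and $F_k=\sum_{s}\mathrm{sgn}(s)\,\Phi_{1,s(1)+1}\Phi_{3,s(3)+1}\cdots\Phi_{2k-1,s(2k-1)+1}$, where $s$ runs over the permutations of $\{1,3,\dots,2k-1\}$. $\mathcal I$ is the kernel of restriction to $\mathrm U_{2n}$; $P_1\equiv P_2\pmod{\mathcal I}$ means they agree on $\mathrm U_{2n}$. For $1\le\alpha,\beta\le 2n$ let $E_{\alpha\beta}$ act by $\sum_{\gamma=1}^{2n}\big(z_{\gamma,\alpha}\frac{\partial}{\partial z_{\gamma,\beta}}-\bar z_{\gamma,\beta}\frac{\partial}{\partial\bar z_{\gamma,\alpha}}\big)$, $H_\gamma=E_{\gamma\gamma}$, and $\Omega=\sum_{\gamma}H_\gamma^2+\sum_{\alpha<\beta}(E_{\alpha\beta}E_{\beta\alpha}+E_{\beta\alpha}E_{\alpha\beta})$. *)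

theory Defs
  imports "HOL-Analysis.Analysis" "HOL-Combinatorics.Permutations"
begin

text \<open>Matrices Z in M_{2n}(C) are functions of 1-based indices; only entries with
indices in 1..2n are used. Polynomials in z, conj z are represented by the
functions they induce on matrices.\<close>

type_synonym cmat = "nat \<Rightarrow> nat \<Rightarrow> complex"

definition Phi :: "nat \<Rightarrow> nat \<Rightarrow> nat \<Rightarrow> cmat \<Rightarrow> complex" where
  "Phi n j l Z = (\<Sum>i=1..n. Z j i * cnj (Z l i))"

definition oddset :: "nat \<Rightarrow> nat set" where
  "oddset k = (\<lambda>i. 2*i+1) ` {..<k}"

definition Fk :: "nat \<Rightarrow> nat \<Rightarrow> cmat \<Rightarrow> complex" where
  "Fk n k Z = (\<Sum>s\<in>{s. s permutes oddset k}.
      of_int (sign s) * (\<Prod>m\<in>oddset k. Phi n m (s m + 1) Z))"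

definition upd_entry :: "cmat \<Rightarrow> nat \<Rightarrow> nat \<Rightarrow> complex \<Rightarrow> cmat" where
  "upd_entry Z a b w = Z(a := (Z a)(b := w))"

definition d_re :: "nat \<Rightarrow> nat \<Rightarrow> (cmat \<Rightarrow> complex) \<Rightarrow> cmat \<Rightarrow> complex" where
  "d_re a b f Z = vector_derivative (\<lambda>t::real. f (upd_entry Z a b (Z a b + of_real t))) (at 0)"

definition d_im :: "nat \<Rightarrow> nat \<Rightarrow> (cmat \<Rightarrow> complex) \<Rightarrow> cmat \<Rightarrow> complex" where
  "d_im a b f Z = vector_derivative (\<lambda>t::real. f (upd_entry Z a b (Z a b + of_real t * \<i>))) (at 0)"

definition dz :: "nat \<Rightarrow> nat \<Rightarrow> (cmat \<Rightarrow> complex) \<Rightarrow> cmat \<Rightarrow> complex" where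
  "dz a b f Z = (d_re a b f Z - \<i> * d_im a b f Z) / 2"

definition dzb :: "nat \<Rightarrow> nat \<Rightarrow> (cmat \<Rightarrow> complex) \<Rightarrow> cmat \<Rightarrow> complex" where
  "dzb a b f Z = (d_re a b f Z + \<i> * d_im a b f Z) / 2"

definition Eop :: "nat \<Rightarrow> nat \<Rightarrow> nat \<Rightarrow> (cmat \<Rightarrow> complex) \<Rightarrow> cmat \<Rightarrow> complex" where
  "Eop n \<alpha> \<beta> f Z = (\<Sum>\<gamma>=1..2*n.
      Z \<gamma> \<alpha> * dz \<gamma> \<beta> f Z - cnj (Z \<gamma> \<beta>) * dzb \<gamma> \<alpha> f Z)"

definition Hop :: "nat \<Rightarrow> nat \<Rightarrow> (cmat \<Rightarrow> complex) \<Rightarrow> cmat \<Rightarrow> complex" where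
  "Hop n \<gamma> = Eop n \<gamma> \<gamma>"

definition Omega :: "nat \<Rightarrow> (cmat \<Rightarrow> complex) \<Rightarrow> cmat \<Rightarrow> complex" where
  "Omega n f Z = (\<Sum>\<gamma>=1..2*n. Hop n \<gamma> (Hop n \<gamma> f) Z)
     + (\<Sum>(\<alpha>,\<beta>)\<in>{(\<alpha>,\<beta>). \<alpha> \<in> {1..2*n} \<and> \<beta> \<in> {1..2*n} \<and> \<alpha> < \<beta>}.
          Eop n \<alpha> \<beta> (Eop n \<beta> \<alpha> f) Z + Eop n \<beta> \<alpha> (Eop n \<alpha> \<beta> f) Z)"

definition unitary_mat :: "nat \<Rightarrow> cmat \<Rightarrow> bool" where
  "unitary_mat m U \<longleftrightarrow> (\<forall>a\<in>{1..m}. \<forall>b\<in>{1..m}.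
      (\<Sum>c=1..m. U a c * cnj (U b c)) = (if a = b then 1 else 0))"

end

theory Submission
  imports Defs
begin

text \<open>
  Each E_ab is a derivation of the ring of polynomials in the entries and their conjugates,
  and E_ab Phi_jl = (c_b - c_a) z_ja conj(z_lb) with c_a = [a <= n]; moreover
  Omega = sum over all a, b of E_ab E_ba. By the Leibniz rule, E_ab E_ba applied to a product
  of Phi's either hits one factor twice or two different factors once each. At a unitary U,
  after summing over a and b, orthogonality of distinct rows of U turns the first kind of term
  into 4n Phi_jl and the second into 2 Phi_j'l Phi_jl', i.e. the same product with two column
  indices exchanged. This needs every row index to differ from every column index, which holds
  for F_k: its rows are odd and its columns even. In the alternating sum F_k the exchange is
  composition with a transposition, so each of the k(k-1) ordered pairs of factors contributes
  -2 F_k, while the first kind of term contributes 4nk F_k.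
\<close>

definition has_wirtinger_derivs ::
    "(cmat \<Rightarrow> complex) \<Rightarrow> nat \<Rightarrow> nat \<Rightarrow> (cmat \<Rightarrow> complex) \<Rightarrow> (cmat \<Rightarrow> complex) \<Rightarrow> bool" where
  "has_wirtinger_derivs f a b D Db \<longleftrightarrow> (\<forall>Z h. ((\<lambda>t::real. f (upd_entry Z a b (Z a b + of_real t * h)))
      has_vector_derivative (D Z * h + Db Z * cnj h)) (at 0))"

lemma upd_entry_same [simp]: "upd_entry Z a b (Z a b) = Z"
  by (simp add: upd_entry_def)

lemma upd_entry_apply: "upd_entry Z a b w c d = (if c = a \<and> d = b then w else Z c d)"
  by (simp add: upd_entry_def)

lemma has_wirtinger_derivs_imp_dz:
  assumes "has_wirtinger_derivs f a b D Db"
  shows "dz a b f Z = D Z" and "dzb a b f Z = Db Z"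
proof -
  have re: "d_re a b f Z = D Z + Db Z"
    using assms[unfolded has_wirtinger_derivs_def, rule_format, of Z 1]
    unfolding d_re_def by (simp add: vector_derivative_at upd_entry_def)
  have im: "d_im a b f Z = D Z * \<i> - Db Z * \<i>"
    using assms[unfolded has_wirtinger_derivs_def, rule_format, of Z "\<i>"]
    unfolding d_im_def by (simp add: vector_derivative_at upd_entry_def)
  show "dz a b f Z = D Z" "dzb a b f Z = Db Z"
    unfolding dz_def dzb_def re im by (simp_all add: algebra_simps)
qed

lemma has_wirtinger_derivs_const: "has_wirtinger_derivs (\<lambda>Z. c) a b (\<lambda>Z. 0) (\<lambda>Z. 0)"
  unfolding has_wirtinger_derivs_def by simp

lemma has_wirtinger_derivs_entry:
  "has_wirtinger_derivs (\<lambda>Z. Z c d) a b (\<lambda>Z. of_bool (c = a \<and> d = b)) (\<lambda>Z. 0)"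
  unfolding has_wirtinger_derivs_def upd_entry_apply
  by (auto intro!: derivative_eq_intros)

lemma has_wirtinger_derivs_cnj_entry:
  "has_wirtinger_derivs (\<lambda>Z. cnj (Z c d)) a b (\<lambda>Z. 0) (\<lambda>Z. of_bool (c = a \<and> d = b))"
  unfolding has_wirtinger_derivs_def upd_entry_apply
  by (auto intro!: derivative_eq_intros)

lemma has_wirtinger_derivs_add:
  "has_wirtinger_derivs f a b D Db \<Longrightarrow> has_wirtinger_derivs g a b D' Db' \<Longrightarrow>
   has_wirtinger_derivs (\<lambda>Z. f Z + g Z) a b (\<lambda>Z. D Z + D' Z) (\<lambda>Z. Db Z + Db' Z)"
  unfolding has_wirtinger_derivs_def
  by (auto intro!: has_vector_derivative_eq_rhs[OF has_vector_derivative_add] simp: algebra_simps)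

lemma has_wirtinger_derivs_mult:
  "has_wirtinger_derivs f a b D Db \<Longrightarrow> has_wirtinger_derivs g a b D' Db' \<Longrightarrow>
   has_wirtinger_derivs (\<lambda>Z. f Z * g Z) a b
     (\<lambda>Z. D Z * g Z + f Z * D' Z) (\<lambda>Z. Db Z * g Z + f Z * Db' Z)"
  unfolding has_wirtinger_derivs_def
  by (auto intro!: has_vector_derivative_eq_rhs[OF has_vector_derivative_mult] simp: algebra_simps)

inductive polyfun :: "(cmat \<Rightarrow> complex) \<Rightarrow> bool" where
  const: "polyfun (\<lambda>Z. c)"
| entry: "polyfun (\<lambda>Z. Z a b)"
| cnj_entry: "polyfun (\<lambda>Z. cnj (Z a b))"
| add: "polyfun f \<Longrightarrow> polyfun g \<Longrightarrow> polyfun (\<lambda>Z. f Z + g Z)"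
| mult: "polyfun f \<Longrightarrow> polyfun g \<Longrightarrow> polyfun (\<lambda>Z. f Z * g Z)"

lemma polyfun_sum: "(\<And>i. i \<in> A \<Longrightarrow> polyfun (f i)) \<Longrightarrow> polyfun (\<lambda>Z. \<Sum>i\<in>A. f i Z)"
  by (induction A rule: infinite_finite_induct) (auto intro: polyfun.intros)

lemma polyfun_prod: "(\<And>i. i \<in> A \<Longrightarrow> polyfun (f i)) \<Longrightarrow> polyfun (\<lambda>Z. \<Prod>i\<in>A. f i Z)"
  by (induction A rule: infinite_finite_induct) (auto intro: polyfun.intros)

lemma polyfun_has_wirtinger_derivs:
  assumes "polyfun f"
  shows "has_wirtinger_derivs f a b (dz a b f) (dzb a b f)"
proof -
  from assms have "\<exists>D Db. has_wirtinger_derivs f a b D Db"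
    by induction (blast intro: has_wirtinger_derivs_const has_wirtinger_derivs_entry
        has_wirtinger_derivs_cnj_entry has_wirtinger_derivs_add has_wirtinger_derivs_mult)+
  then obtain D Db where f: "has_wirtinger_derivs f a b D Db" by blast
  have "dz a b f = D" "dzb a b f = Db"
    using has_wirtinger_derivs_imp_dz[OF f] by auto
  with f show ?thesis by simp
qed

lemma Eop_eq_wirtinger_derivs:
  assumes "\<And>a b. has_wirtinger_derivs f a b (D a b) (Db a b)"
  shows "Eop n \<alpha> \<beta> f Z = (\<Sum>\<gamma>=1..2*n. Z \<gamma> \<alpha> * D \<gamma> \<beta> Z - cnj (Z \<gamma> \<beta>) * Db \<gamma> \<alpha> Z)"
  unfolding Eop_def using has_wirtinger_derivs_imp_dz[OF assms] by simp

lemma Eop_const: "Eop n \<alpha> \<beta> (\<lambda>Z. c) Z = 0"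
  by (simp add: Eop_eq_wirtinger_derivs[OF has_wirtinger_derivs_const])

lemma Eop_entry: "Eop n \<alpha> \<beta> (\<lambda>Z. Z j i) Z = (if j \<in> {1..2*n} \<and> i = \<beta> then Z j \<alpha> else 0)"
  by (cases "i = \<beta>") (simp_all add: Eop_eq_wirtinger_derivs[OF has_wirtinger_derivs_entry])

lemma Eop_cnj_entry:
  "Eop n \<alpha> \<beta> (\<lambda>Z. cnj (Z l i)) Z = (if l \<in> {1..2*n} \<and> i = \<alpha> then - cnj (Z l \<beta>) else 0)"
  by (cases "i = \<alpha>")
    (simp_all add: Eop_eq_wirtinger_derivs[OF has_wirtinger_derivs_cnj_entry] sum_negf)

lemma Eop_add:
  assumes "polyfun f" "polyfun g"
  shows "Eop n \<alpha> \<beta> (\<lambda>Z. f Z + g Z) Z = Eop n \<alpha> \<beta> f Z + Eop n \<alpha> \<beta> g Z"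
  unfolding Eop_eq_wirtinger_derivs[OF has_wirtinger_derivs_add[OF
        polyfun_has_wirtinger_derivs[OF assms(1)] polyfun_has_wirtinger_derivs[OF assms(2)]]]
  by (simp add: Eop_def sum.distrib[symmetric] algebra_simps)

lemma Eop_mult:
  assumes "polyfun f" "polyfun g"
  shows "Eop n \<alpha> \<beta> (\<lambda>Z. f Z * g Z) Z = Eop n \<alpha> \<beta> f Z * g Z + f Z * Eop n \<alpha> \<beta> g Z"
  unfolding Eop_eq_wirtinger_derivs[OF has_wirtinger_derivs_mult[OF
        polyfun_has_wirtinger_derivs[OF assms(1)] polyfun_has_wirtinger_derivs[OF assms(2)]]]
  by (simp add: Eop_def sum_distrib_left sum_distrib_right sum.distrib[symmetric] algebra_simps)

lemma Eop_cmult: "polyfun f \<Longrightarrow> Eop n \<alpha> \<beta> (\<lambda>Z. c * f Z) Z = c * Eop n \<alpha> \<beta> f Z"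
  using Eop_mult[OF polyfun.const] by (simp add: Eop_const)

lemma Eop_sum:
  "(\<And>i. i \<in> A \<Longrightarrow> polyfun (f i)) \<Longrightarrow>
   Eop n \<alpha> \<beta> (\<lambda>Z. \<Sum>i\<in>A. f i Z) Z = (\<Sum>i\<in>A. Eop n \<alpha> \<beta> (f i) Z)"
  by (induction A rule: infinite_finite_induct) (simp_all add: Eop_const Eop_add polyfun_sum)

lemma Eop_prod:
  "(\<And>i. i \<in> A \<Longrightarrow> polyfun (f i)) \<Longrightarrow>
   Eop n \<alpha> \<beta> (\<lambda>Z. \<Prod>i\<in>A. f i Z) Z = (\<Sum>i\<in>A. Eop n \<alpha> \<beta> (f i) Z * (\<Prod>j\<in>A-{i}. f j Z))"
proof (induction A rule: infinite_finite_induct)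
  case (insert x F)
  have "(\<Prod>j\<in>insert x F - {i}. f j Z) = f x Z * (\<Prod>j\<in>F - {i}. f j Z)" if "i \<in> F" for i
  proof -
    have "insert x F - {i} = insert x (F - {i})" using insert.hyps that by auto
    then show ?thesis using insert.hyps by simp
  qed
  with insert show ?case
    by (simp add: Eop_mult polyfun_prod sum_distrib_left algebra_simps cong: sum.cong)
qed (simp_all add: Eop_const)

lemma polyfun_Eop: "polyfun f \<Longrightarrow> polyfun (Eop n \<alpha> \<beta> f)"
proof (induction rule: polyfun.induct)
  case (const c)
  have "Eop n \<alpha> \<beta> (\<lambda>Z. c) = (\<lambda>Z. 0)" by (rule ext) (rule Eop_const)
  then show ?case by (simp add: polyfun.const)
next
  case (entry a b)
  define P where "P \<longleftrightarrow> a \<in> {1..2*n} \<and> b = \<beta>"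
  have "Eop n \<alpha> \<beta> (\<lambda>Z. Z a b) = (\<lambda>Z. if P then Z a \<alpha> else 0)"
    unfolding P_def by (rule ext) (rule Eop_entry)
  then show ?case by (cases P) (simp_all add: polyfun.intros)
next
  case (cnj_entry a b)
  define P where "P \<longleftrightarrow> a \<in> {1..2*n} \<and> b = \<alpha>"
  have "Eop n \<alpha> \<beta> (\<lambda>Z. cnj (Z a b)) = (\<lambda>Z. if P then - cnj (Z a \<beta>) else 0)"
    unfolding P_def by (rule ext) (rule Eop_cnj_entry)
  moreover have "polyfun (\<lambda>Z. - cnj (Z a \<beta>))"
    using polyfun.mult[OF polyfun.const[of "-1"] polyfun.cnj_entry] by simp
  ultimately show ?case by (cases P) (simp_all add: polyfun.const)
next
  case (add f g)
  have "Eop n \<alpha> \<beta> (\<lambda>Z. f Z + g Z) = (\<lambda>Z. Eop n \<alpha> \<beta> f Z + Eop n \<alpha> \<beta> g Z)"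
    by (rule ext) (rule Eop_add[OF add.hyps])
  then show ?case by (simp add: add.IH polyfun.add)
next
  case (mult f g)
  have "Eop n \<alpha> \<beta> (\<lambda>Z. f Z * g Z) = (\<lambda>Z. Eop n \<alpha> \<beta> f Z * g Z + f Z * Eop n \<alpha> \<beta> g Z)"
    by (rule ext) (rule Eop_mult[OF mult.hyps])
  then show ?case by (simp add: mult.IH mult.hyps polyfun.add polyfun.mult)
qed

lemma Phi_eq: "Phi n j l = (\<lambda>Z. \<Sum>i=1..n. Z j i * cnj (Z l i))"
  by (rule ext) (rule Phi_def)

lemma polyfun_Phi: "polyfun (Phi n j l)"
  unfolding Phi_eq by (intro polyfun_sum polyfun.intros)

lemma Eop_Phi:
  assumes "j \<in> {1..2*n}" "l \<in> {1..2*n}" "1 \<le> \<alpha>" "1 \<le> \<beta>"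
  shows "Eop n \<alpha> \<beta> (Phi n j l) Z = (of_bool (\<beta> \<le> n) - of_bool (\<alpha> \<le> n)) * (Z j \<alpha> * cnj (Z l \<beta>))"
proof -
  have "Eop n \<alpha> \<beta> (Phi n j l) Z = (\<Sum>i=1..n.
      (if i = \<beta> then Z j \<alpha> * cnj (Z l \<beta>) else 0) - (if i = \<alpha> then Z j \<alpha> * cnj (Z l \<beta>) else 0))"
    using assms(1,2) by (auto simp: Phi_eq Eop_sum Eop_mult Eop_entry Eop_cnj_entry polyfun.intros
        intro!: sum.cong)
  also have "\<dots> = (of_bool (\<beta> \<le> n) - of_bool (\<alpha> \<le> n)) * (Z j \<alpha> * cnj (Z l \<beta>))"
    using assms(3,4) by (simp add: sum_subtractf algebra_simps)
  finally show ?thesis .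
qed

lemma Eop_Eop_Phi:
  assumes "j \<in> {1..2*n}" "l \<in> {1..2*n}" "1 \<le> \<alpha>" "1 \<le> \<beta>"
  shows "Eop n \<alpha> \<beta> (Eop n \<beta> \<alpha> (Phi n j l)) Z
    = (of_bool (\<alpha> \<le> n) - of_bool (\<beta> \<le> n)) * (Z j \<alpha> * cnj (Z l \<alpha>) - Z j \<beta> * cnj (Z l \<beta>))"
proof -
  define c :: complex where "c = of_bool (\<alpha> \<le> n) - of_bool (\<beta> \<le> n)"
  have "Eop n \<beta> \<alpha> (Phi n j l) = (\<lambda>Z. c * (Z j \<beta> * cnj (Z l \<alpha>)))"
    using assms unfolding c_def by (intro ext) (rule Eop_Phi)
  then show ?thesis
    using assms(1,2) unfolding c_def[symmetric]
    by (simp add: Eop_cmult Eop_mult Eop_entry Eop_cnj_entry polyfun.intros algebra_simps)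
qed

lemma Eop_Eop_prod:
  assumes "\<And>i. i \<in> A \<Longrightarrow> polyfun (f i)"
  shows "Eop n \<alpha> \<beta> (Eop n \<gamma> \<delta> (\<lambda>Z. \<Prod>i\<in>A. f i Z)) Z =
    (\<Sum>m\<in>A. Eop n \<alpha> \<beta> (Eop n \<gamma> \<delta> (f m)) Z * (\<Prod>i\<in>A-{m}. f i Z)
       + Eop n \<gamma> \<delta> (f m) Z * (\<Sum>m'\<in>A-{m}. Eop n \<alpha> \<beta> (f m') Z * (\<Prod>i\<in>A-{m}-{m'}. f i Z)))"
proof -
  have poly_rest: "polyfun (\<lambda>Z. \<Prod>i\<in>A-{m}. f i Z)" for m
    by (rule polyfun_prod) (simp add: assms)
  have Eop_rest: "Eop n \<alpha> \<beta> (\<lambda>Z. \<Prod>i\<in>A-{m}. f i Z) Z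
      = (\<Sum>m'\<in>A-{m}. Eop n \<alpha> \<beta> (f m') Z * (\<Prod>i\<in>A-{m}-{m'}. f i Z))" for m
    by (rule Eop_prod) (simp add: assms)
  have "Eop n \<gamma> \<delta> (\<lambda>Z. \<Prod>i\<in>A. f i Z) = (\<lambda>Z. \<Sum>m\<in>A. Eop n \<gamma> \<delta> (f m) Z * (\<Prod>i\<in>A-{m}. f i Z))"
    by (rule ext) (rule Eop_prod[OF assms])
  then have "Eop n \<alpha> \<beta> (Eop n \<gamma> \<delta> (\<lambda>Z. \<Prod>i\<in>A. f i Z)) Z
      = (\<Sum>m\<in>A. Eop n \<alpha> \<beta> (\<lambda>Z. Eop n \<gamma> \<delta> (f m) Z * (\<Prod>i\<in>A-{m}. f i Z)) Z)"
    by (simp add: Eop_sum polyfun.mult polyfun_Eop poly_rest assms)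
  also have "\<dots> = (\<Sum>m\<in>A. Eop n \<alpha> \<beta> (Eop n \<gamma> \<delta> (f m)) Z * (\<Prod>i\<in>A-{m}. f i Z)
       + Eop n \<gamma> \<delta> (f m) Z * (\<Sum>m'\<in>A-{m}. Eop n \<alpha> \<beta> (f m') Z * (\<Prod>i\<in>A-{m}-{m'}. f i Z)))"
    by (intro sum.cong refl)
      (simp add: Eop_mult Eop_rest polyfun_Eop poly_rest assms)
  finally show ?thesis .
qed

lemma sum_diagonal_plus_pairs:
  fixes T :: "'a::linorder \<Rightarrow> 'a \<Rightarrow> 'b::comm_monoid_add"
  assumes "finite N"
  shows "(\<Sum>\<gamma>\<in>N. T \<gamma> \<gamma>) + (\<Sum>(\<alpha>,\<beta>)\<in>{(\<alpha>,\<beta>). \<alpha> \<in> N \<and> \<beta> \<in> N \<and> \<alpha> < \<beta>}. T \<alpha> \<beta> + T \<beta> \<alpha>)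
     = (\<Sum>\<alpha>\<in>N. \<Sum>\<beta>\<in>N. T \<alpha> \<beta>)"
proof -
  define L where "L = {(\<alpha>,\<beta>). \<alpha> \<in> N \<and> \<beta> \<in> N \<and> \<alpha> < \<beta>}"
  define D where "D = (\<lambda>\<gamma>. (\<gamma>,\<gamma>)) ` N"
  have "finite L"
    by (rule finite_subset[of _ "N \<times> N"]) (auto simp: L_def assms)
  then have fin: "finite L" "finite (prod.swap ` L)" "finite D"
    by (simp_all add: D_def assms)
  have NN: "N \<times> N = D \<union> (L \<union> prod.swap ` L)"
    by (auto simp: D_def L_def image_iff)
  have disj: "D \<inter> (L \<union> prod.swap ` L) = {}" "L \<inter> prod.swap ` L = {}"
    by (auto simp: D_def L_def)
  have "(\<Sum>\<alpha>\<in>N. \<Sum>\<beta>\<in>N. T \<alpha> \<beta>)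
      = sum (case_prod T) D + (sum (case_prod T) L + sum (case_prod T) (prod.swap ` L))"
    unfolding sum.cartesian_product NN using fin disj by (simp add: sum.union_disjoint)
  also have "sum (case_prod T) D = (\<Sum>\<gamma>\<in>N. T \<gamma> \<gamma>)"
    unfolding D_def by (simp add: sum.reindex inj_on_def)
  also have "sum (case_prod T) (prod.swap ` L) = (\<Sum>(\<alpha>,\<beta>)\<in>L. T \<beta> \<alpha>)"
    by (simp add: sum.reindex case_prod_beta)
  finally show ?thesis
    by (simp add: L_def sum.distrib[symmetric] case_prod_beta)
qed

lemma Omega_eq_sum_Eop_Eop: "Omega n f Z = (\<Sum>\<alpha>=1..2*n. \<Sum>\<beta>=1..2*n. Eop n \<alpha> \<beta> (Eop n \<beta> \<alpha> f) Z)"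
  unfolding Omega_def Hop_def
  by (rule sum_diagonal_plus_pairs[of _ "\<lambda>\<alpha> \<beta>. Eop n \<alpha> \<beta> (Eop n \<beta> \<alpha> f) Z"]) simp

lemma Omega_lincomb:
  assumes "\<And>i. i \<in> A \<Longrightarrow> polyfun (f i)"
  shows "Omega n (\<lambda>Z. \<Sum>i\<in>A. c i * f i Z) Z = (\<Sum>i\<in>A. c i * Omega n (f i) Z)"
proof -
  have "Eop n \<beta> \<alpha> (\<lambda>Z. \<Sum>i\<in>A. c i * f i Z) = (\<lambda>Z. \<Sum>i\<in>A. c i * Eop n \<beta> \<alpha> (f i) Z)" for \<alpha> \<beta>
    using assms by (intro ext) (simp add: Eop_sum Eop_cmult polyfun.intros)
  then have "Eop n \<alpha> \<beta> (Eop n \<beta> \<alpha> (\<lambda>Z. \<Sum>i\<in>A. c i * f i Z)) Z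
      = (\<Sum>i\<in>A. c i * Eop n \<alpha> \<beta> (Eop n \<beta> \<alpha> (f i)) Z)" for \<alpha> \<beta>
    using assms by (simp add: Eop_sum Eop_cmult polyfun_Eop polyfun.intros)
  then show ?thesis
    unfolding Omega_eq_sum_Eop_Eop sum_distrib_left
    by (simp add: sum.swap[where B = A])
qed

lemma sum_sum_diff_mult_diff:
  fixes c w :: "'a \<Rightarrow> 'b::comm_ring_1"
  assumes "sum w N = 0"
  shows "(\<Sum>\<alpha>\<in>N. \<Sum>\<beta>\<in>N. (c \<alpha> - c \<beta>) * (w \<alpha> - w \<beta>)) = 2 * of_nat (card N) * (\<Sum>\<alpha>\<in>N. c \<alpha> * w \<alpha>)"
proof -
  have "(c \<alpha> - c \<beta>) * (w \<alpha> - w \<beta>) = c \<alpha> * w \<alpha> + c \<beta> * w \<beta> - c \<alpha> * w \<beta> - c \<beta> * w \<alpha>" for \<alpha> \<beta>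
    by (simp add: algebra_simps)
  moreover have "(\<Sum>\<alpha>\<in>N. c \<alpha> * (w \<alpha> * of_nat (card N))) = of_nat (card N) * (\<Sum>\<alpha>\<in>N. c \<alpha> * w \<alpha>)"
    by (simp add: sum_distrib_left algebra_simps)
  ultimately show ?thesis
    by (simp add: sum.distrib sum_subtractf sum_distrib_left[symmetric] sum_distrib_right[symmetric]
        assms algebra_simps)
qed

lemma sum_sum_idempotent_diff_products:
  fixes c A B :: "'a \<Rightarrow> 'b::comm_ring_1"
  assumes "\<And>\<alpha>. c \<alpha> * c \<alpha> = c \<alpha>" and "sum A N = 0" and "sum B N = 0"
  shows "(\<Sum>\<alpha>\<in>N. \<Sum>\<beta>\<in>N. (c \<alpha> - c \<beta>) * (c \<beta> - c \<alpha>) * (A \<alpha> * B \<beta>))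
     = 2 * (\<Sum>\<alpha>\<in>N. c \<alpha> * A \<alpha>) * (\<Sum>\<beta>\<in>N. c \<beta> * B \<beta>)"
proof -
  have pointwise: "(c \<alpha> - c \<beta>) * (c \<beta> - c \<alpha>) * (A \<alpha> * B \<beta>)
      = 2 * ((c \<alpha> * A \<alpha>) * (c \<beta> * B \<beta>)) - (c \<alpha> * A \<alpha>) * B \<beta> - A \<alpha> * (c \<beta> * B \<beta>)"
    for \<alpha> \<beta>
  proof -
    have "(c \<alpha> - c \<beta>) * (c \<beta> - c \<alpha>) = 2 * c \<alpha> * c \<beta> - c \<alpha> * c \<alpha> - c \<beta> * c \<beta>"
      by (simp add: algebra_simps)
    then show ?thesis by (simp add: assms algebra_simps)
  qed
  have "(\<Sum>\<alpha>\<in>N. \<Sum>\<beta>\<in>N. (c \<alpha> - c \<beta>) * (c \<beta> - c \<alpha>) * (A \<alpha> * B \<beta>))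
      = 2 * ((\<Sum>\<alpha>\<in>N. c \<alpha> * A \<alpha>) * (\<Sum>\<beta>\<in>N. c \<beta> * B \<beta>))
        - (\<Sum>\<alpha>\<in>N. c \<alpha> * A \<alpha>) * sum B N - sum A N * (\<Sum>\<beta>\<in>N. c \<beta> * B \<beta>)"
    by (simp only: pointwise sum_subtractf sum_product sum_distrib_left[of "2::'b"])
  then show ?thesis
    using assms(2,3) by simp
qed

lemma unitary_mat_rows_orthogonal:
  assumes "unitary_mat m U" "j \<in> {1..m}" "l \<in> {1..m}" "j \<noteq> l"
  shows "(\<Sum>\<alpha>=1..m. U j \<alpha> * cnj (U l \<alpha>)) = 0"
  using assms unfolding unitary_mat_def by auto

lemma sum_of_bool_le_mult:
  fixes n m :: nat and f :: "nat \<Rightarrow> 'a::comm_semiring_1"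
  assumes "n \<le> m"
  shows "(\<Sum>\<alpha>=1..m. of_bool (\<alpha> \<le> n) * f \<alpha>) = (\<Sum>\<alpha>=1..n. f \<alpha>)"
proof -
  have "{1..m} \<inter> {\<alpha>. \<alpha> \<le> n} = {1..n}"
    using assms by (auto intro: le_trans)
  then show ?thesis by simp
qed

lemma sum_Eop_Eop_Phi_unitary:
  assumes "unitary_mat (2*n) U" "j \<in> {1..2*n}" "l \<in> {1..2*n}" "j \<noteq> l"
  shows "(\<Sum>\<alpha>=1..2*n. \<Sum>\<beta>=1..2*n. Eop n \<alpha> \<beta> (Eop n \<beta> \<alpha> (Phi n j l)) U) = 4 * of_nat n * Phi n j l U"
proof -
  have "(\<Sum>\<alpha>=1..2*n. \<Sum>\<beta>=1..2*n. Eop n \<alpha> \<beta> (Eop n \<beta> \<alpha> (Phi n j l)) U)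
      = (\<Sum>\<alpha>=1..2*n. \<Sum>\<beta>=1..2*n. (of_bool (\<alpha> \<le> n) - of_bool (\<beta> \<le> n))
          * (U j \<alpha> * cnj (U l \<alpha>) - U j \<beta> * cnj (U l \<beta>)))"
    using assms(2,3) by (intro sum.cong refl) (simp add: Eop_Eop_Phi)
  also have "\<dots> = 2 * of_nat (2 * n) * (\<Sum>\<alpha>=1..2*n. of_bool (\<alpha> \<le> n) * (U j \<alpha> * cnj (U l \<alpha>)))"
    using unitary_mat_rows_orthogonal[OF assms] by (subst sum_sum_diff_mult_diff) simp_all
  also have "\<dots> = 4 * of_nat n * Phi n j l U"
    by (simp only: sum_of_bool_le_mult[OF le_add2] mult_2 Phi_def) simp
  finally show ?thesis .
qed

lemma sum_Eop_Phi_mult_Eop_Phi_unitary: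
  assumes "unitary_mat (2*n) U"
    and "j \<in> {1..2*n}" "l \<in> {1..2*n}" "j' \<in> {1..2*n}" "l' \<in> {1..2*n}"
    and "j' \<noteq> l" "j \<noteq> l'"
  shows "(\<Sum>\<alpha>=1..2*n. \<Sum>\<beta>=1..2*n. Eop n \<beta> \<alpha> (Phi n j l) U * Eop n \<alpha> \<beta> (Phi n j' l') U)
    = 2 * Phi n j' l U * Phi n j l' U"
proof -
  have "(\<Sum>\<alpha>=1..2*n. \<Sum>\<beta>=1..2*n. Eop n \<beta> \<alpha> (Phi n j l) U * Eop n \<alpha> \<beta> (Phi n j' l') U)
      = (\<Sum>\<alpha>=1..2*n. \<Sum>\<beta>=1..2*n. (of_bool (\<alpha> \<le> n) - of_bool (\<beta> \<le> n))
          * (of_bool (\<beta> \<le> n) - of_bool (\<alpha> \<le> n))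
          * ((U j' \<alpha> * cnj (U l \<alpha>)) * (U j \<beta> * cnj (U l' \<beta>))))"
    using assms(2-5) by (intro sum.cong refl) (simp add: Eop_Phi)
  also have "\<dots> = 2 * (\<Sum>\<alpha>=1..2*n. of_bool (\<alpha> \<le> n) * (U j' \<alpha> * cnj (U l \<alpha>)))
      * (\<Sum>\<beta>=1..2*n. of_bool (\<beta> \<le> n) * (U j \<beta> * cnj (U l' \<beta>)))"
    using unitary_mat_rows_orthogonal[OF assms(1,4,3,6)]
      unitary_mat_rows_orthogonal[OF assms(1,2,5,7)]
    by (subst sum_sum_idempotent_diff_products) simp_all
  also have "\<dots> = 2 * Phi n j' l U * Phi n j l' U"
    by (simp only: sum_of_bool_le_mult[OF le_add2] mult_2 Phi_def)
  finally show ?thesis .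
qed

definition swapped_pairs_sum :: "('a \<Rightarrow> 'b \<Rightarrow> 'c::comm_ring_1) \<Rightarrow> 'a set \<Rightarrow> ('a \<Rightarrow> 'b) \<Rightarrow> 'c" where
  "swapped_pairs_sum g S \<sigma> =
     (\<Sum>m\<in>S. \<Sum>m'\<in>S-{m}. g m' (\<sigma> m) * g m (\<sigma> m') * (\<Prod>x\<in>S-{m}-{m'}. g x (\<sigma> x)))"

lemma Omega_prod_Phi_unitary:
  assumes "unitary_mat (2*n) U" and "finite A"
    and range: "\<And>i. i \<in> A \<Longrightarrow> j i \<in> {1..2*n} \<and> l i \<in> {1..2*n}"
    and disjoint: "\<And>i i'. i \<in> A \<Longrightarrow> i' \<in> A \<Longrightarrow> j i \<noteq> l i'"
  shows "Omega n (\<lambda>Z. \<Prod>i\<in>A. Phi n (j i) (l i) Z) U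
    = 4 * of_nat n * of_nat (card A) * (\<Prod>i\<in>A. Phi n (j i) (l i) U)
      + 2 * swapped_pairs_sum (\<lambda>x y. Phi n (j x) y U) A l"
proof -
  let ?\<phi> = "\<lambda>i. Phi n (j i) (l i)"
  let ?N = "{1..2*n}"
  have "Omega n (\<lambda>Z. \<Prod>i\<in>A. ?\<phi> i Z) U = (\<Sum>\<alpha>\<in>?N. \<Sum>\<beta>\<in>?N. \<Sum>m\<in>A.
      Eop n \<alpha> \<beta> (Eop n \<beta> \<alpha> (?\<phi> m)) U * (\<Prod>i\<in>A-{m}. ?\<phi> i U)
      + Eop n \<beta> \<alpha> (?\<phi> m) U * (\<Sum>m'\<in>A-{m}. Eop n \<alpha> \<beta> (?\<phi> m') U * (\<Prod>i\<in>A-{m}-{m'}. ?\<phi> i U)))"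
    unfolding Omega_eq_sum_Eop_Eop by (simp add: Eop_Eop_prod polyfun_Phi)
  also have "\<dots> = (\<Sum>m\<in>A.
      (\<Sum>\<alpha>\<in>?N. \<Sum>\<beta>\<in>?N. Eop n \<alpha> \<beta> (Eop n \<beta> \<alpha> (?\<phi> m)) U) * (\<Prod>i\<in>A-{m}. ?\<phi> i U)
      + (\<Sum>m'\<in>A-{m}. (\<Sum>\<alpha>\<in>?N. \<Sum>\<beta>\<in>?N. Eop n \<beta> \<alpha> (?\<phi> m) U * Eop n \<alpha> \<beta> (?\<phi> m') U)
          * (\<Prod>i\<in>A-{m}-{m'}. ?\<phi> i U)))"
    by (simp add: sum.distrib sum_distrib_left sum_distrib_right mult.assoc sum.swap[where B = A]
        sum.swap[where B = "A - {m}" for m])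
  also have "\<dots> = (\<Sum>m\<in>A. 4 * of_nat n * ?\<phi> m U * (\<Prod>i\<in>A-{m}. ?\<phi> i U)
      + (\<Sum>m'\<in>A-{m}. 2 * Phi n (j m') (l m) U * Phi n (j m) (l m') U * (\<Prod>i\<in>A-{m}-{m'}. ?\<phi> i U)))"
    using assms(1) range disjoint
    by (intro sum.cong refl arg_cong2[where f = "(+)"] arg_cong2[where f = "(*)"]
        sum_Eop_Eop_Phi_unitary sum_Eop_Phi_mult_Eop_Phi_unitary) auto
  also have "\<dots> = 4 * of_nat n * of_nat (card A) * (\<Prod>i\<in>A. ?\<phi> i U)
      + 2 * swapped_pairs_sum (\<lambda>x y. Phi n (j x) y U) A l"
  proof -
    have "?\<phi> m U * (\<Prod>i\<in>A-{m}. ?\<phi> i U) = (\<Prod>i\<in>A. ?\<phi> i U)" if "m \<in> A" for m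
      by (rule prod.remove[OF \<open>finite A\<close> that, symmetric])
    then show ?thesis
      by (simp add: swapped_pairs_sum_def sum.distrib sum_distrib_left mult.assoc cong: sum.cong)
  qed
  finally show ?thesis .
qed

lemma signed_sum_swap_values:
  fixes g :: "'a \<Rightarrow> 'a \<Rightarrow> 'b::comm_ring_1"
  assumes "finite S" "m \<in> S" "m' \<in> S" "m \<noteq> m'"
  shows "(\<Sum>s | s permutes S.
            of_int (sign s) * (g m' (s m) * g m (s m') * (\<Prod>x\<in>S-{m}-{m'}. g x (s x))))
       = - (\<Sum>s | s permutes S. of_int (sign s) * (\<Prod>x\<in>S. g x (s x)))"
proof -
  define \<tau> where "\<tau> = Transposition.transpose m m'"
  have \<tau>: "\<tau> permutes S"
    unfolding \<tau>_def using assms(2,3) by (rule permutes_swap_id)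
  have sign: "sign (s \<circ> \<tau>) = - sign s" if "s permutes S" for s
    using permutes_imp_permutation[OF assms(1) that] assms(4)
    by (simp add: \<tau>_def sign_compose permutation_swap_id sign_swap_id)
  have prod: "(\<Prod>x\<in>S. g x (s (\<tau> x))) = g m' (s m) * g m (s m') * (\<Prod>x\<in>S-{m}-{m'}. g x (s x))" for s
  proof -
    have "(\<Prod>x\<in>S. g x (s (\<tau> x))) = g m (s (\<tau> m)) * g m' (s (\<tau> m')) * (\<Prod>x\<in>S-{m}-{m'}. g x (s (\<tau> x)))"
      using assms by (simp add: prod.remove[of S m] prod.remove[of "S - {m}" m'] mult.assoc)
    also have "(\<Prod>x\<in>S-{m}-{m'}. g x (s (\<tau> x))) = (\<Prod>x\<in>S-{m}-{m'}. g x (s x))"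
      by (intro prod.cong) (auto simp: \<tau>_def)
    finally show ?thesis by (simp add: \<tau>_def)
  qed
  have "(\<Sum>s | s permutes S. of_int (sign s) * (\<Prod>x\<in>S. g x (s x)))
      = (\<Sum>s | s permutes S. of_int (sign (s \<circ> \<tau>)) * (\<Prod>x\<in>S. g x ((s \<circ> \<tau>) x)))"
    by (rule sum_permutations_compose_right[OF \<tau>])
  also have "\<dots> = - (\<Sum>s | s permutes S.
      of_int (sign s) * (g m' (s m) * g m (s m') * (\<Prod>x\<in>S-{m}-{m'}. g x (s x))))"
    unfolding sum_negf[symmetric] by (intro sum.cong refl) (simp add: sign prod)
  finally show ?thesis by simp
qed

lemma signed_sum_swapped_pairs:
  fixes g :: "'a \<Rightarrow> 'a \<Rightarrow> 'b::comm_ring_1"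
  assumes "finite S"
  shows "(\<Sum>s | s permutes S. of_int (sign s) * swapped_pairs_sum g S s)
     = - of_nat (card S * (card S - 1)) * (\<Sum>s | s permutes S. of_int (sign s) * (\<Prod>x\<in>S. g x (s x)))"
proof -
  let ?D = "\<Sum>s | s permutes S. of_int (sign s) * (\<Prod>x\<in>S. g x (s x))"
  have "(\<Sum>s | s permutes S. of_int (sign s) * swapped_pairs_sum g S s)
      = (\<Sum>m\<in>S. \<Sum>m'\<in>S-{m}. \<Sum>s | s permutes S.
          of_int (sign s) * (g m' (s m) * g m (s m') * (\<Prod>x\<in>S-{m}-{m'}. g x (s x))))"
    by (simp add: swapped_pairs_sum_def sum_distrib_left sum.swap[where B = S]
        sum.swap[where B = "S - {m}" for m])
  also have "\<dots> = (\<Sum>m\<in>S. \<Sum>m'\<in>S-{m}. - ?D)"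
    using assms by (intro sum.cong refl signed_sum_swap_values) auto
  also have "\<dots> = - of_nat (card S * (card S - 1)) * ?D"
    using assms by (simp add: sum_negf)
  finally show ?thesis .
qed

lemma oddset_range: "m \<in> oddset k \<Longrightarrow> odd m \<and> 1 \<le> m \<and> m < 2*k"
  unfolding oddset_def by auto

lemma finite_oddset [simp]: "finite (oddset k)"
  by (simp add: oddset_def)

lemma card_oddset: "card (oddset k) = k"
  unfolding oddset_def by (subst card_image) (auto simp: inj_on_def)

lemma Omega_Fk_summand_unitary:
  assumes "unitary_mat (2*n) U" "k \<le> n" "s permutes oddset k"
  shows "Omega n (\<lambda>Z. \<Prod>m\<in>oddset k. Phi n m (s m + 1) Z) U
    = 4 * of_nat n * of_nat k * (\<Prod>m\<in>oddset k. Phi n m (s m + 1) U)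
      + 2 * swapped_pairs_sum (\<lambda>x y. Phi n x (y + 1) U) (oddset k) s"
proof -
  have "m \<in> {1..2*n} \<and> s m + 1 \<in> {1..2*n}" "m \<noteq> s m' + 1"
    if "m \<in> oddset k" "m' \<in> oddset k" for m m'
  proof -
    have "s m \<in> oddset k" "s m' \<in> oddset k"
      using assms(3) that by (simp_all add: permutes_in_image)
    with that have "odd m" "odd (s m')" "m \<in> {1..2*n} \<and> s m + 1 \<in> {1..2*n}"
      using oddset_range assms(2) by fastforce+
    then show "m \<in> {1..2*n} \<and> s m + 1 \<in> {1..2*n}" "m \<noteq> s m' + 1"
      by auto
  qed
  then show ?thesis
    using Omega_prod_Phi_unitary[OF assms(1) finite_oddset, where j = "\<lambda>i. i" and l = "\<lambda>m. s m + 1"]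
    by (simp add: card_oddset swapped_pairs_sum_def)
qed

theorem theorem3p7:
  fixes n k :: nat and U :: cmat
  assumes "1 \<le> n" and "1 \<le> k" and "k \<le> n"
    and "unitary_mat (2*n) U"
  shows "Omega n (Fk n k) U
           = of_int (4 * int n * int k - 2 * int k * (int k - 1)) * Fk n k U"
proof -
  let ?S = "oddset k" and ?g = "\<lambda>x y. Phi n x (y + 1) U"
  have F: "Fk n k U = (\<Sum>s | s permutes ?S. of_int (sign s) * (\<Prod>m\<in>?S. ?g m (s m)))"
    by (simp add: Fk_def)
  have "Omega n (Fk n k) U
      = (\<Sum>s | s permutes ?S. of_int (sign s) * Omega n (\<lambda>Z. \<Prod>m\<in>?S. Phi n m (s m + 1) Z) U)"
    unfolding Fk_def[abs_def] by (rule Omega_lincomb) (intro polyfun_prod polyfun_Phi)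
  also have "\<dots> = (\<Sum>s | s permutes ?S. of_int (sign s) *
      (4 * of_nat n * of_nat k * (\<Prod>m\<in>?S. ?g m (s m)) + 2 * swapped_pairs_sum ?g ?S s))"
    using assms(3,4) by (intro sum.cong refl) (simp only: Omega_Fk_summand_unitary mem_Collect_eq)
  also have "\<dots> = 4 * of_nat n * of_nat k * Fk n k U
      + 2 * (\<Sum>s | s permutes ?S. of_int (sign s) * swapped_pairs_sum ?g ?S s)"
    unfolding F by (simp add: sum.distrib sum_distrib_left algebra_simps)
  also have "\<dots> = (4 * of_nat n * of_nat k - 2 * of_nat (k * (k - 1))) * Fk n k U"
    unfolding signed_sum_swapped_pairs[OF finite_oddset] card_oddset F by (simp add: algebra_simps)
  also have "\<dots> = of_int (4 * int n * int k - 2 * int k * (int k - 1)) * Fk n k U"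
    using assms(2) by (simp add: of_nat_diff)
  finally show ?thesis .
qed

end
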